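(* Let $0\le k<m\le n-1$. Let $U$ be an $(m+1)$-block of $\Lambda_N^n$, let $U_1,U_2\subset U$ be two disjoint $m$-blocks, and let $U_1'\subset U_1$ and $U_2'\subset U_2$ be $k$-blocks. Let $\sigma\in\{-1,+1\}^{\Lambda_N^n}$, let $\varphi:U_1'\to U_2'$ be a bijection with $d(\varphi(x),\varphi(y))=d(x,y)$, and define $\sigma'$ by $\sigma'(v)=\sigma(v)$ for $v\notin U_1'\cup U_2'$, $\sigma'(v)=\sigma(\varphi(v))$ for $v\in U_1'$, $\sigma'(v)=\sigma(\varphi^{-1}(v))$ for $v\in U_2'$. For $k+1\le i\le m$ let $A_i=\{x\in U_1:\sigma(x)=-1,\ d(x,U_1')=i\}$ and $C_i=\{x\in U_2:\sigma(x)=-1,\ d(x,U_2')=i\}$. Then $$\mathcal H(\sigma')-\mathcal H(\sigma)=\sum_{i=k+1}^m2\,(J_i-J_{m+1})\,\big(|A_i|-|C_i|\big)\,\big(|U_2'\cap\sigma|-|U_1'\cap\sigma|\big),$$ where $|U_j'\cap\sigma|$ is the number of $v\in U_j'$ with $\sigma(v)=+1$.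
   Context: Hierarchical lattice $\Lambda_N^n=\{1,\dots,N^n\}$ ($N\ge2$); for $0\le k\le n$ the $k$-blocks are the sets $\{jN^k+1,\dots,(j+1)N^k\}$, $0\le j<N^{n-k}$; $d(a,b)$ is the smallest $k\ge0$ such that $a,b$ lie in a common $k$-block. For $x\notin U_1'$ with $x\in U_1$, all $v\in U_1'$ have the same distance to $x$, denoted $d(x,U_1')$ (similarly for $U_2'$). Hamiltonian with $h>0$, $J_1,\dots,J_n>0$: $\mathcal H(\sigma)=-\frac12\sum_{\{v,w\},v\ne w}J_{d(v,w)}\sigma(v)\sigma(w)-\frac h2\sum_v\sigma(v)$, the first sum over unordered pairs of distinct vertices. *)

theory Defs
  imports Complex_Main
begin

definition lattice :: "nat \<Rightarrow> nat \<Rightarrow> nat set" where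
  "lattice N n = {1..N^n}"

definition is_block :: "nat \<Rightarrow> nat \<Rightarrow> nat \<Rightarrow> nat set \<Rightarrow> bool" where
  "is_block N n k B \<longleftrightarrow> k \<le> n \<and> (\<exists>j < N^(n-k). B = {j * N^k + 1 .. (j+1) * N^k})"

definition hdist :: "nat \<Rightarrow> nat \<Rightarrow> nat \<Rightarrow> nat \<Rightarrow> nat" where
  "hdist N n a b = (LEAST k. \<exists>B. is_block N n k B \<and> a \<in> B \<and> b \<in> B)"

definition hamiltonian :: "nat \<Rightarrow> nat \<Rightarrow> (nat \<Rightarrow> real) \<Rightarrow> real \<Rightarrow> (nat \<Rightarrow> int) \<Rightarrow> real" where
  "hamiltonian N n J h \<sigma> =
     - (1/2) * (\<Sum>p \<in> {(v, w). v \<in> lattice N n \<and> w \<in> lattice N n \<and> v < w}.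
                  J (hdist N n (fst p) (snd p)) * of_int (\<sigma> (fst p)) * of_int (\<sigma> (snd p)))
     - (h/2) * (\<Sum>v \<in> lattice N n. of_int (\<sigma> v))"

end

theory Submission
  imports Defs
begin

text \<open>Put W = U1' \<union> U2' and let \<pi> be the involution of W that exchanges U1' and U2' through \<phi>.
  All distances between U1' and U2' equal m + 1, so \<pi> is an isometry of W, and \<sigma>' = \<sigma> \<circ> \<pi> on W.
  Hence the field term and all interactions inside W or inside its complement are unchanged, and
  only pairs with exactly one vertex in W contribute. A vertex v outside W sees the block U1' at a
  single distance D1(v) and U2' at a single distance D2(v), so the energy changes by
  -1/2 (S2 - S1) \<Sum> \<sigma>(v) (J(D1 v) - J(D2 v)) (summed over v \<notin> W), where Sj is the spin sum over Uj'.
  Outside U1 \<union> U2 we have D1 = D2. On U1 - U1' we have D2 = m + 1, and the vertices with D1 = i,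
  k < i \<le> m, form a shell of N^i - N^(i-1) vertices, |A_i| of which carry spin -1; symmetrically
  on U2 - U2'. The shell sizes cancel between the two blocks, leaving the stated formula.\<close>

lemma mem_interval_iff_div:
  assumes "0 < (d::nat)"
  shows "v \<in> {j*d+1..(j+1)*d} \<longleftrightarrow> 1 \<le> v \<and> (v-1) div d = j"
proof -
  have "(v-1) div d = j \<longleftrightarrow> j*d \<le> v-1 \<and> v-1 < (j+1)*d"
    using assms by (metis Suc_eq_plus1 div_less_iff_less_mult div_times_less_eq_dividend
      le_less_Suc_eq less_eq_div_iff_mult_less_eq)
  then show ?thesis by (cases v) auto
qed

lemma mem_lattice_iff: "v \<in> lattice N n \<longleftrightarrow> 1 \<le> v \<and> v - 1 < N^n"
  unfolding lattice_def by auto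

lemma mem_block_iff:
  assumes "is_block N n k B" "N > 0" "x \<in> B"
  shows "v \<in> B \<longleftrightarrow> 1 \<le> v \<and> (v-1) div N^k = (x-1) div N^k"
  using assms mem_interval_iff_div[of "N^k"] unfolding is_block_def by auto

lemma block_subset_lattice:
  assumes "is_block N n k B"
  shows "B \<subseteq> lattice N n"
proof
  fix v assume v: "v \<in> B"
  from assms obtain j where j: "k \<le> n" "j < N^(n-k)" "B = {j * N^k + 1 .. (j+1) * N^k}"
    unfolding is_block_def by blast
  have "(j+1) * N^k \<le> N^(n-k) * N^k" using j(2) by (intro mult_le_mono1) simp
  also have "\<dots> = N^n" using j(1) by (simp add: power_add[symmetric])
  finally show "v \<in> lattice N n" using v j(3) unfolding lattice_def by auto
qed

lemma block_nonempty: "is_block N n k B \<Longrightarrow> N > 0 \<Longrightarrow> B \<noteq> {}"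
  unfolding is_block_def by fastforce

lemma card_block: "is_block N n k B \<Longrightarrow> card B = N^k"
  unfolding is_block_def by auto

lemma block_exists:
  assumes "N > 0" "x \<in> lattice N n" "i \<le> n"
  obtains B where "is_block N n i B" "x \<in> B"
proof
  define j where "j = (x-1) div N^i"
  have "x - 1 < N^(n-i) * N^i" using assms by (simp add: mem_lattice_iff power_add[symmetric])
  then have "j < N^(n-i)" unfolding j_def by (simp add: less_mult_imp_div_less)
  then show "is_block N n i {j * N^i + 1 .. (j+1) * N^i}" unfolding is_block_def using assms(3) by blast
  show "x \<in> {j * N^i + 1 .. (j+1) * N^i}"
    using assms mem_interval_iff_div[of "N^i" x j] unfolding j_def lattice_def by simp
qed

lemma div_power_eq_mono:
  assumes "(x::nat) div N^j = y div N^j" "j \<le> j'"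
  shows "x div N^j' = y div N^j'"
proof -
  have "N^j' = N^j * N^(j'-j)" using assms(2) by (simp add: power_add[symmetric])
  then show ?thesis using assms(1) by (simp add: div_mult2_eq)
qed

lemma in_common_block_iff:
  assumes "N > 0" "a \<in> lattice N n" "b \<in> lattice N n"
  shows "(\<exists>B. is_block N n i B \<and> a \<in> B \<and> b \<in> B) \<longleftrightarrow> i \<le> n \<and> (a-1) div N^i = (b-1) div N^i"
proof
  assume "\<exists>B. is_block N n i B \<and> a \<in> B \<and> b \<in> B"
  then show "i \<le> n \<and> (a-1) div N^i = (b-1) div N^i"
    using assms(1) mem_block_iff unfolding is_block_def by metis
next
  assume i: "i \<le> n \<and> (a-1) div N^i = (b-1) div N^i"
  obtain B where "is_block N n i B" "a \<in> B" using block_exists assms i by metis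
  then show "\<exists>B. is_block N n i B \<and> a \<in> B \<and> b \<in> B"
    using assms i mem_block_iff[of N n i B a b] by (auto simp: lattice_def)
qed

lemma hdist_le_iff:
  assumes "N > 0" "a \<in> lattice N n" "b \<in> lattice N n" "i \<le> n"
  shows "hdist N n a b \<le> i \<longleftrightarrow> (a-1) div N^i = (b-1) div N^i"
proof -
  let ?P = "\<lambda>j. j \<le> n \<and> (a-1) div N^j = (b-1) div N^j"
  have hdist: "hdist N n a b = (LEAST j. ?P j)"
    unfolding hdist_def in_common_block_iff[OF assms(1-3)] ..
  have "?P n" using assms(2,3) by (simp add: mem_lattice_iff)
  then have "?P (hdist N n a b)" unfolding hdist by (rule LeastI)
  then show ?thesis
    using assms(4) div_power_eq_mono[of "a-1" N _ "b-1" i] Least_le[of ?P i] unfolding hdist by auto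
qed

lemma hdist_le_height:
  assumes "N > 0" "a \<in> lattice N n" "b \<in> lattice N n"
  shows "hdist N n a b \<le> n"
  using assms hdist_le_iff[OF assms, of n] by (simp add: mem_lattice_iff)

lemma hdist_sym: "hdist N n a b = hdist N n b a"
  unfolding hdist_def by (metis (no_types, lifting))

lemma hdist_ultrametric:
  assumes "N > 0" "a \<in> lattice N n" "b \<in> lattice N n" "c \<in> lattice N n"
  shows "hdist N n a c \<le> max (hdist N n a b) (hdist N n b c)"
proof -
  define i where "i = max (hdist N n a b) (hdist N n b c)"
  have i: "i \<le> n" using hdist_le_height assms unfolding i_def by simp
  have "(a-1) div N^i = (b-1) div N^i" "(b-1) div N^i = (c-1) div N^i"
    using hdist_le_iff[OF assms(1,2,3) i] hdist_le_iff[OF assms(1,3,4) i] unfolding i_def by simp_all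
  then show ?thesis using hdist_le_iff[OF assms(1,2,4) i] unfolding i_def by simp
qed

lemma mem_block_iff_hdist:
  assumes "is_block N n k B" "N > 0" "x0 \<in> B"
  shows "x \<in> B \<longleftrightarrow> x \<in> lattice N n \<and> hdist N n x x0 \<le> k"
proof -
  have k: "k \<le> n" using assms(1) unfolding is_block_def by simp
  have x0: "x0 \<in> lattice N n" using assms(1,3) block_subset_lattice by blast
  show ?thesis
    using block_subset_lattice[OF assms(1)] mem_block_iff[OF assms] hdist_le_iff[OF assms(2) _ x0 k]
    by (auto simp: mem_lattice_iff)
qed

lemma hdist_block_const:
  assumes "is_block N n k B" "N > 0" "v \<in> lattice N n" "v \<notin> B" "x \<in> B" "y \<in> B"
  shows "hdist N n v x = hdist N n v y"
proof -
  have le: "hdist N n v x \<le> hdist N n v y" if "x \<in> B" "y \<in> B" for x y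
  proof -
    have "hdist N n y x \<le> k" "k < hdist N n v y" "x \<in> lattice N n" "y \<in> lattice N n"
      using mem_block_iff_hdist[OF assms(1,2) that(1), of y] mem_block_iff_hdist[OF assms(1,2) that(2), of v]
        block_subset_lattice[OF assms(1)] that assms(3,4) by auto
    then show ?thesis using hdist_ultrametric[OF assms(2,3), of y x] by simp
  qed
  show ?thesis using le assms(5,6) by (simp add: antisym)
qed

lemma hdist_across_subblocks:
  assumes "is_block N n (m+1) U" "is_block N n m U1" "U1 \<subseteq> U" "N > 0" "x \<in> U - U1" "y \<in> U1"
  shows "hdist N n x y = m + 1"
  using mem_block_iff_hdist[OF assms(1,4), of y x] mem_block_iff_hdist[OF assms(2,4,6), of x] assms(3,5,6)
  by auto

lemma card_hdist_le:
  assumes "N > 0" "x0 \<in> lattice N n" "i \<le> n"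
  shows "card {x \<in> lattice N n. hdist N n x x0 \<le> i} = N^i"
proof -
  obtain B where B: "is_block N n i B" "x0 \<in> B" using block_exists assms by metis
  then have "{x \<in> lattice N n. hdist N n x x0 \<le> i} = B" using mem_block_iff_hdist assms(1) by blast
  then show ?thesis using card_block B(1) by simp
qed

lemma card_hdist_level_in_annulus:
  assumes "is_block N n m V" "is_block N n k V'" "V' \<subseteq> V" "N > 0" "x0 \<in> V'" "k < i" "i \<le> m"
  shows "card {x \<in> V - V'. hdist N n x x0 = i} = N^i - N^(i-1)"
proof -
  define ball where "ball j = {x \<in> lattice N n. hdist N n x x0 \<le> j}" for j
  have m: "m \<le> n" using assms(1) unfolding is_block_def by simp
  have x0: "x0 \<in> lattice N n" using assms(1,3,5) block_subset_lattice by blast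
  have card_ball: "card (ball j) = N^j" if "j \<le> i" for j
    unfolding ball_def using that assms(7) m by (intro card_hdist_le[OF assms(4) x0]) simp
  have "x \<in> V - V' \<and> hdist N n x x0 = i \<longleftrightarrow> x \<in> ball i - ball (i-1)" for x
    unfolding ball_def Diff_iff mem_Collect_eq mem_block_iff_hdist[OF assms(1,4) subsetD[OF assms(3,5)]]
      mem_block_iff_hdist[OF assms(2,4,5)] using assms(6,7) by auto
  then have "{x \<in> V - V'. hdist N n x x0 = i} = ball i - ball (i-1)" by blast
  moreover have "ball (i-1) \<subseteq> ball i" "finite (ball i)" unfolding ball_def lattice_def by auto
  ultimately show ?thesis using card_ball[of i] card_ball[of "i-1"] by (simp add: card_Diff_subset rev_finite_subset)
qed

lemma sum_spins:
  fixes \<sigma> :: "'a \<Rightarrow> int"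
  assumes "finite S" "\<forall>v\<in>S. \<sigma> v = 1 \<or> \<sigma> v = -1"
  shows sum_spins_neg: "(\<Sum>v\<in>S. real_of_int (\<sigma> v)) = real (card S) - 2 * real (card {v\<in>S. \<sigma> v = -1})"
    and sum_spins_pos: "(\<Sum>v\<in>S. real_of_int (\<sigma> v)) = 2 * real (card {v\<in>S. \<sigma> v = 1}) - real (card S)"
proof -
  let ?P = "{v\<in>S. \<sigma> v = 1}" and ?Q = "{v\<in>S. \<sigma> v = -1}"
  have S: "S = ?P \<union> ?Q" using assms(2) by auto
  have PQ: "finite ?P" "finite ?Q" "?P \<inter> ?Q = {}" using assms(1) by auto
  have "(\<Sum>v\<in>S. real_of_int (\<sigma> v)) = (\<Sum>v\<in>?P. real_of_int (\<sigma> v)) + (\<Sum>v\<in>?Q. real_of_int (\<sigma> v))"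
    by (subst S) (rule sum.union_disjoint[OF PQ])
  moreover have "card S = card ?P + card ?Q" by (subst S) (rule card_Un_disjoint[OF PQ])
  ultimately show "(\<Sum>v\<in>S. real_of_int (\<sigma> v)) = real (card S) - 2 * real (card ?Q)"
    and "(\<Sum>v\<in>S. real_of_int (\<sigma> v)) = 2 * real (card ?P) - real (card S)" by simp_all
qed

lemma sum_spins_block_annulus:
  fixes \<sigma> :: "nat \<Rightarrow> int" and f :: "nat \<Rightarrow> real"
  assumes "is_block N n m V" "is_block N n k V'" "V' \<subseteq> V" "N > 0" "x0 \<in> V'"
    and spins: "\<forall>v\<in>V. \<sigma> v = 1 \<or> \<sigma> v = -1"
  shows "(\<Sum>v\<in>V-V'. real_of_int (\<sigma> v) * f (hdist N n v x0)) =
    (\<Sum>i=k+1..m. f i * (real (N^i - N^(i-1))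
       - 2 * real (card {x \<in> V. \<sigma> x = -1 \<and> x \<notin> V' \<and> (\<forall>v \<in> V'. hdist N n x v = i)})))"
proof -
  define level where "level i = {x \<in> V - V'. hdist N n x x0 = i}" for i
  have finV: "finite V" using block_subset_lattice[OF assms(1)] finite_subset unfolding lattice_def by auto
  have "hdist N n v x0 \<in> {k+1..m}" if "v \<in> V - V'" for v
    using that mem_block_iff_hdist[OF assms(1,4) subsetD[OF assms(3,5)], of v]
      mem_block_iff_hdist[OF assms(2,4,5), of v] by auto
  then have "(\<Sum>v\<in>V-V'. real_of_int (\<sigma> v) * f (hdist N n v x0)) =
      (\<Sum>i\<in>{k+1..m}. \<Sum>v\<in>level i. real_of_int (\<sigma> v) * f (hdist N n v x0))"
    unfolding level_def by (intro sum.group[symmetric]) (use finV in auto)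
  also have "\<dots> = (\<Sum>i=k+1..m. f i * (\<Sum>v\<in>level i. real_of_int (\<sigma> v)))"
    by (simp add: level_def sum_distrib_left mult.commute)
  also have "\<dots> = (\<Sum>i=k+1..m. f i * (real (N^i - N^(i-1))
       - 2 * real (card {x \<in> V. \<sigma> x = -1 \<and> x \<notin> V' \<and> (\<forall>v \<in> V'. hdist N n x v = i)})))"
  proof (rule sum.cong[OF refl])
    fix i assume i: "i \<in> {k+1..m}"
    have "hdist N n x v = hdist N n x x0" if "x \<in> V - V'" "v \<in> V'" for x v
      using hdist_block_const[OF assms(2,4) _ _ that(2) assms(5)] block_subset_lattice[OF assms(1)] that(1)
      by blast
    then have "{x \<in> level i. \<sigma> x = -1} = {x \<in> V. \<sigma> x = -1 \<and> x \<notin> V' \<and> (\<forall>v \<in> V'. hdist N n x v = i)}"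
      using assms(5) unfolding level_def by auto
    moreover have "card (level i) = N^i - N^(i-1)"
      unfolding level_def using card_hdist_level_in_annulus[OF assms(1-5)] i by simp
    moreover have "finite (level i)" "\<forall>v\<in>level i. \<sigma> v = 1 \<or> \<sigma> v = -1"
      using finV spins unfolding level_def by auto
    ultimately show "f i * (\<Sum>v\<in>level i. real_of_int (\<sigma> v)) = f i * (real (N^i - N^(i-1))
       - 2 * real (card {x \<in> V. \<sigma> x = -1 \<and> x \<notin> V' \<and> (\<forall>v \<in> V'. hdist N n x v = i)}))"
      by (simp add: sum_spins_neg)
  qed
  finally show ?thesis .
qed

lemma sum_ordered_pairs:
  fixes g :: "'a::linorder \<Rightarrow> 'a \<Rightarrow> real"
  assumes "finite L" "\<And>v w. v \<in> L \<Longrightarrow> w \<in> L \<Longrightarrow> g v w = g w v" "\<And>v. v \<in> L \<Longrightarrow> g v v = 0"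
  shows "(\<Sum>p\<in>{(v, w). v \<in> L \<and> w \<in> L \<and> v < w}. g (fst p) (snd p)) = 1/2 * (\<Sum>v\<in>L. \<Sum>w\<in>L. g v w)"
proof -
  let ?A = "{(v, w). v \<in> L \<and> w \<in> L \<and> v < w}" and ?B = "{(v, w). v \<in> L \<and> w \<in> L \<and> w < v}"
    and ?D = "{(v, w). v \<in> L \<and> w \<in> L \<and> v = w}"
  have fin: "finite ?A" "finite ?B" "finite ?D"
    using assms(1) by (auto intro: finite_subset[of _ "L \<times> L"])
  have LL: "L \<times> L = ?A \<union> ?B \<union> ?D" by auto
  have "(\<Sum>v\<in>L. \<Sum>w\<in>L. g v w) = (\<Sum>p\<in>L \<times> L. g (fst p) (snd p))"
    by (simp add: sum.cartesian_product case_prod_beta)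
  also have "\<dots> = (\<Sum>p\<in>?A. g (fst p) (snd p)) + (\<Sum>p\<in>?B. g (fst p) (snd p)) + (\<Sum>p\<in>?D. g (fst p) (snd p))"
    unfolding LL using fin by (subst sum.union_disjoint, auto)+
  also have "(\<Sum>p\<in>?D. g (fst p) (snd p)) = 0" using assms(3) by (intro sum.neutral) auto
  also have "(\<Sum>p\<in>?B. g (fst p) (snd p)) = (\<Sum>p\<in>?A. g (fst p) (snd p))"
  proof -
    have "bij_betw prod.swap ?A ?B" by (rule bij_betw_byWitness[where f'=prod.swap]) auto
    then have "(\<Sum>p\<in>?B. g (fst p) (snd p)) = (\<Sum>p\<in>?A. g (snd p) (fst p))"
      by (simp add: sum.reindex_bij_betw[symmetric])
    also have "\<dots> = (\<Sum>p\<in>?A. g (fst p) (snd p))" using assms(2) by (intro sum.cong) auto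
    finally show ?thesis .
  qed
  finally show ?thesis by simp
qed

lemma hamiltonian_diff_double_sum:
  fixes \<sigma> \<sigma>' :: "nat \<Rightarrow> int"
  assumes spins: "\<forall>v\<in>lattice N n. \<sigma> v = 1 \<or> \<sigma> v = -1" "\<forall>v\<in>lattice N n. \<sigma>' v = 1 \<or> \<sigma>' v = -1"
    and field: "(\<Sum>v\<in>lattice N n. \<sigma>' v) = (\<Sum>v\<in>lattice N n. \<sigma> v)"
  shows "hamiltonian N n J h \<sigma>' - hamiltonian N n J h \<sigma> =
    -1/4 * (\<Sum>v\<in>lattice N n. \<Sum>w\<in>lattice N n. J (hdist N n v w) *
      (of_int (\<sigma>' v) * of_int (\<sigma>' w) - of_int (\<sigma> v) * of_int (\<sigma> w)))"
proof -
  define g where "g v w = J (hdist N n v w) *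
      (of_int (\<sigma>' v) * of_int (\<sigma>' w) - of_int (\<sigma> v) * of_int (\<sigma> w) :: real)" for v w
  have "g v w = g w v" for v w by (simp add: g_def hdist_sym mult.commute)
  moreover have "g v v = 0" if "v \<in> lattice N n" for v
  proof -
    have "\<sigma> v = 1 \<or> \<sigma> v = -1" "\<sigma>' v = 1 \<or> \<sigma>' v = -1" using spins that by auto
    then show ?thesis unfolding g_def by auto
  qed
  ultimately have pairs: "(\<Sum>p\<in>{(v, w). v \<in> lattice N n \<and> w \<in> lattice N n \<and> v < w}. g (fst p) (snd p))
      = 1/2 * (\<Sum>v\<in>lattice N n. \<Sum>w\<in>lattice N n. g v w)"
    by (intro sum_ordered_pairs) (auto simp: lattice_def)
  have "(\<Sum>v\<in>lattice N n. real_of_int (\<sigma>' v)) = (\<Sum>v\<in>lattice N n. real_of_int (\<sigma> v))"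
    using field by (metis of_int_sum)
  then show ?thesis
    using pairs unfolding hamiltonian_def g_def by (simp add: sum_subtractf algebra_simps)
qed

lemma double_sum_diff_perm:
  fixes K :: "'a \<Rightarrow> 'a \<Rightarrow> real" and s s' :: "'a \<Rightarrow> real"
  assumes "finite L" "W \<subseteq> L" and bij: "bij_betw \<pi> W W"
    and K_sym: "\<And>v w. v \<in> L \<Longrightarrow> w \<in> L \<Longrightarrow> K v w = K w v"
    and K_perm: "\<And>v w. v \<in> W \<Longrightarrow> w \<in> W \<Longrightarrow> K (\<pi> v) (\<pi> w) = K v w"
    and s'_perm: "\<And>v. v \<in> W \<Longrightarrow> s' v = s (\<pi> v)"
    and s'_out: "\<And>v. v \<in> L - W \<Longrightarrow> s' v = s v"
  shows "(\<Sum>v\<in>L. \<Sum>w\<in>L. K v w * (s' v * s' w - s v * s w)) =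
    2 * (\<Sum>v\<in>L-W. s v * (\<Sum>w\<in>W. K v w * (s' w - s w)))"
proof -
  define g where "g v w = K v w * (s' v * s' w - s v * s w)" for v w
  have split: "sum f L = sum f W + sum f (L - W)" for f :: "'a \<Rightarrow> real"
    using assms(1,2) by (simp add: sum.subset_diff)
  have "(\<Sum>v\<in>W. \<Sum>w\<in>W. K v w * (s' v * s' w)) = (\<Sum>v\<in>W. \<Sum>w\<in>W. K (\<pi> v) (\<pi> w) * (s (\<pi> v) * s (\<pi> w)))"
    by (intro sum.cong refl) (simp add: s'_perm K_perm)
  also have "\<dots> = (\<Sum>v\<in>W. \<Sum>w\<in>W. K (\<pi> v) w * (s (\<pi> v) * s w))"
    by (intro sum.cong refl sum.reindex_bij_betw[OF bij])
  also have "\<dots> = (\<Sum>v\<in>W. \<Sum>w\<in>W. K v w * (s v * s w))"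
    by (rule sum.reindex_bij_betw[OF bij])
  finally have WW: "(\<Sum>v\<in>W. \<Sum>w\<in>W. g v w) = 0"
    unfolding g_def right_diff_distrib sum_subtractf by simp
  have OO: "(\<Sum>v\<in>L-W. \<Sum>w\<in>L-W. g v w) = 0"
    by (intro sum.neutral ballI) (simp add: g_def s'_out)
  have WO: "(\<Sum>v\<in>W. \<Sum>w\<in>L-W. g v w) = (\<Sum>v\<in>L-W. \<Sum>w\<in>W. g v w)"
    using K_sym assms(2) unfolding g_def by (subst sum.swap) (intro sum.cong refl, auto simp: mult.commute)
  have OW: "(\<Sum>w\<in>W. g v w) = s v * (\<Sum>w\<in>W. K v w * (s' w - s w))" if "v \<in> L - W" for v
    unfolding g_def sum_distrib_left using s'_out[OF that] by (intro sum.cong refl) (simp add: algebra_simps)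
  have "(\<Sum>v\<in>L. \<Sum>w\<in>L. g v w) =
      (\<Sum>v\<in>W. \<Sum>w\<in>W. g v w) + (\<Sum>v\<in>W. \<Sum>w\<in>L-W. g v w) + (\<Sum>v\<in>L-W. \<Sum>w\<in>W. g v w) + (\<Sum>v\<in>L-W. \<Sum>w\<in>L-W. g v w)"
    by (simp add: split sum.distrib)
  then show ?thesis unfolding WW OO WO using OW by (simp add: g_def)
qed

lemma swap_perm_exists:
  assumes "bij_betw \<phi> A B" "A \<inter> B = {}"
  obtains \<pi> where "bij_betw \<pi> (A \<union> B) (A \<union> B)"
    "\<And>v. v \<in> A \<Longrightarrow> \<pi> v = \<phi> v" "\<And>v. v \<in> B \<Longrightarrow> \<pi> v = inv_into A \<phi> v"
proof
  define \<pi> where "\<pi> v = (if v \<in> A then \<phi> v else inv_into A \<phi> v)" for v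
  have "\<pi> v \<in> A \<union> B \<and> \<pi> (\<pi> v) = v" if "v \<in> A \<union> B" for v
    using that assms bij_betw_inv_into[OF assms(1)] bij_betw_imp_surj_on[OF assms(1)]
    unfolding \<pi>_def by (auto simp: bij_betw_def f_inv_into_f inv_into_f_f)
  then show "bij_betw \<pi> (A \<union> B) (A \<union> B)" by (intro bij_betw_byWitness[where f'=\<pi>]) auto
  show "\<pi> v = \<phi> v" if "v \<in> A" for v using that unfolding \<pi>_def by simp
  show "\<pi> v = inv_into A \<phi> v" if "v \<in> B" for v using that assms(2) unfolding \<pi>_def by auto
qed

lemma swap_perm_isometric:
  assumes bij: "bij_betw \<phi> A B" "A \<inter> B = {}"
    and \<pi>_A: "\<And>v. v \<in> A \<Longrightarrow> \<pi> v = \<phi> v" and \<pi>_B: "\<And>v. v \<in> B \<Longrightarrow> \<pi> v = inv_into A \<phi> v"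
    and iso: "\<And>x y. x \<in> A \<Longrightarrow> y \<in> A \<Longrightarrow> d (\<phi> x) (\<phi> y) = d x y"
    and cross: "\<And>x y. x \<in> A \<Longrightarrow> y \<in> B \<Longrightarrow> d x y = c" "\<And>x y. x \<in> A \<Longrightarrow> y \<in> B \<Longrightarrow> d y x = c"
    and "v \<in> A \<union> B" "w \<in> A \<union> B"
  shows "d (\<pi> v) (\<pi> w) = d v w"
proof -
  have inv_A: "inv_into A \<phi> y \<in> A" and \<phi>_inv: "\<phi> (inv_into A \<phi> y) = y" if "y \<in> B" for y
    using that bij_betw_inv_into[OF bij(1)] bij_betw_imp_surj_on[OF bij(1)]
    by (auto simp: bij_betw_def f_inv_into_f)
  have \<phi>_B: "\<phi> x \<in> B" if "x \<in> A" for x using that bij(1) bij_betwE by blast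
  have not_A: "y \<notin> A" if "y \<in> B" for y using that bij(2) by blast
  show ?thesis
    using \<open>v \<in> A \<union> B\<close> \<open>w \<in> A \<union> B\<close>
  proof (elim UnE)
    assume "v \<in> B" "w \<in> B"
    then show ?thesis using iso[OF inv_A inv_A] by (simp add: \<pi>_B \<phi>_inv)
  qed (use \<pi>_A \<pi>_B iso cross \<phi>_B inv_A not_A in auto)
qed

lemma sum_swap_two_levels:
  fixes K s s' :: "'a \<Rightarrow> real"
  assumes "finite A" "finite B" "A \<inter> B = {}"
    and "\<And>w. w \<in> A \<Longrightarrow> K w = a" "\<And>w. w \<in> B \<Longrightarrow> K w = b"
    and "sum s' A = sum s B" "sum s' B = sum s A"
  shows "(\<Sum>w\<in>A \<union> B. K w * (s' w - s w)) = (a - b) * (sum s B - sum s A)"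
proof -
  have "(\<Sum>w\<in>A \<union> B. K w * (s' w - s w)) = (\<Sum>w\<in>A. a * (s' w - s w)) + (\<Sum>w\<in>B. b * (s' w - s w))"
    using assms(1-5) by (simp add: sum.union_disjoint)
  then show ?thesis
    using assms(6,7) by (simp add: sum_distrib_left[symmetric] sum_subtractf algebra_simps)
qed

lemma hamiltonian_diff_swap:
  fixes \<sigma> \<sigma>' :: "nat \<Rightarrow> int" and \<phi> :: "nat \<Rightarrow> nat"
  assumes AB: "A \<subseteq> lattice N n" "B \<subseteq> lattice N n" "A \<inter> B = {}"
    and bij: "bij_betw \<phi> A B"
    and iso: "\<forall>x \<in> A. \<forall>y \<in> A. hdist N n (\<phi> x) (\<phi> y) = hdist N n x y"
    and cross: "\<And>x y. x \<in> A \<Longrightarrow> y \<in> B \<Longrightarrow> hdist N n x y = c"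
    and far_A: "\<And>v w. v \<in> lattice N n - (A \<union> B) \<Longrightarrow> w \<in> A \<Longrightarrow> hdist N n v w = hdist N n v a"
    and far_B: "\<And>v w. v \<in> lattice N n - (A \<union> B) \<Longrightarrow> w \<in> B \<Longrightarrow> hdist N n v w = hdist N n v b"
    and spins: "\<forall>v \<in> lattice N n. \<sigma> v = 1 \<or> \<sigma> v = -1"
    and s_out: "\<forall>v. v \<notin> A \<union> B \<longrightarrow> \<sigma>' v = \<sigma> v"
    and s_A: "\<forall>v \<in> A. \<sigma>' v = \<sigma> (\<phi> v)"
    and s_B: "\<forall>v \<in> B. \<sigma>' v = \<sigma> (inv_into A \<phi> v)"
  shows "hamiltonian N n J h \<sigma>' - hamiltonian N n J h \<sigma> =
    -1/2 * ((\<Sum>v\<in>B. real_of_int (\<sigma> v)) - (\<Sum>v\<in>A. real_of_int (\<sigma> v)))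
      * (\<Sum>v\<in>lattice N n - (A \<union> B). real_of_int (\<sigma> v) * (J (hdist N n v a) - J (hdist N n v b)))"
proof -
  let ?L = "lattice N n" and ?W = "A \<union> B"
  define S_A where "S_A = (\<Sum>v\<in>A. real_of_int (\<sigma> v))"
  define S_B where "S_B = (\<Sum>v\<in>B. real_of_int (\<sigma> v))"
  obtain \<pi> where \<pi>: "bij_betw \<pi> ?W ?W" "\<And>v. v \<in> A \<Longrightarrow> \<pi> v = \<phi> v" "\<And>v. v \<in> B \<Longrightarrow> \<pi> v = inv_into A \<phi> v"
    using swap_perm_exists[OF bij AB(3)] by metis
  have fin: "finite ?L" "finite A" "finite B"
    using AB by (auto simp: lattice_def intro: finite_subset)
  have W_L: "?W \<subseteq> ?L" using AB by blast
  have \<sigma>'_perm: "\<sigma>' v = \<sigma> (\<pi> v)" if "v \<in> ?W" for v using that s_A s_B \<pi>(2,3) by auto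
  have \<pi>_W: "\<pi> v \<in> ?W" if "v \<in> ?W" for v using \<pi>(1) that bij_betwE by blast
  have spins': "\<forall>v \<in> ?L. \<sigma>' v = 1 \<or> \<sigma>' v = -1"
  proof
    fix v assume "v \<in> ?L"
    then show "\<sigma>' v = 1 \<or> \<sigma>' v = -1"
      using spins s_out \<sigma>'_perm[of v] \<pi>_W[of v] W_L by (cases "v \<in> ?W") auto
  qed
  have "(\<Sum>v\<in>?W. \<sigma>' v) = (\<Sum>v\<in>?W. \<sigma> v)"
    using \<sigma>'_perm sum.reindex_bij_betw[OF \<pi>(1), of \<sigma>] by simp
  moreover have "(\<Sum>v\<in>?L - ?W. \<sigma>' v) = (\<Sum>v\<in>?L - ?W. \<sigma> v)" using s_out by simp
  ultimately have field: "(\<Sum>v\<in>?L. \<sigma>' v) = (\<Sum>v\<in>?L. \<sigma> v)"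
    using fin(1) W_L by (simp add: sum.subset_diff[of ?W ?L])
  have K_perm: "J (hdist N n (\<pi> v) (\<pi> w)) = J (hdist N n v w)" if "v \<in> ?W" "w \<in> ?W" for v w
    using swap_perm_isometric[OF bij AB(3) \<pi>(2,3), of "hdist N n" c] iso cross that
    by (simp add: hdist_sym)
  have sum_A: "(\<Sum>v\<in>A. real_of_int (\<sigma>' v)) = S_B"
    using s_A sum.reindex_bij_betw[OF bij, of "\<lambda>v. real_of_int (\<sigma> v)"] unfolding S_B_def by simp
  have sum_B: "(\<Sum>v\<in>B. real_of_int (\<sigma>' v)) = S_A"
    using s_B sum.reindex_bij_betw[OF bij_betw_inv_into[OF bij], of "\<lambda>v. real_of_int (\<sigma> v)"]
    unfolding S_A_def by simp
  have inner: "(\<Sum>w\<in>?W. J (hdist N n v w) * (real_of_int (\<sigma>' w) - real_of_int (\<sigma> w)))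
      = (J (hdist N n v a) - J (hdist N n v b)) * (S_B - S_A)" if "v \<in> ?L - ?W" for v
    using sum_swap_two_levels[OF fin(2,3) AB(3), of "\<lambda>w. J (hdist N n v w)"] far_A[OF that] far_B[OF that]
      sum_A sum_B unfolding S_A_def S_B_def by simp
  have "hamiltonian N n J h \<sigma>' - hamiltonian N n J h \<sigma> =
      -1/4 * (\<Sum>v\<in>?L. \<Sum>w\<in>?L. J (hdist N n v w) *
        (of_int (\<sigma>' v) * of_int (\<sigma>' w) - of_int (\<sigma> v) * of_int (\<sigma> w)))"
    by (rule hamiltonian_diff_double_sum[OF spins spins' field])
  also have "\<dots> = -1/4 * (2 * (\<Sum>v\<in>?L - ?W. real_of_int (\<sigma> v) *
      (\<Sum>w\<in>?W. J (hdist N n v w) * (real_of_int (\<sigma>' w) - real_of_int (\<sigma> w)))))"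
    using fin(1) W_L \<pi>(1) hdist_sym K_perm \<sigma>'_perm s_out
    by (subst double_sum_diff_perm[where \<pi> = \<pi>]) auto
  also have "\<dots> = -1/2 * (\<Sum>v\<in>?L - ?W. real_of_int (\<sigma> v) * (J (hdist N n v a) - J (hdist N n v b)) * (S_B - S_A))"
    using inner by (simp add: mult.assoc)
  also have "\<dots> = -1/2 * (S_B - S_A) * (\<Sum>v\<in>?L - ?W. real_of_int (\<sigma> v) * (J (hdist N n v a) - J (hdist N n v b)))"
    by (simp only: sum_distrib_right[symmetric]) (simp only: mult_ac)
  finally show ?thesis unfolding S_A_def S_B_def .
qed

lemma sum_outside_sibling_subblocks:
  fixes \<sigma> :: "nat \<Rightarrow> int" and J :: "nat \<Rightarrow> real"
  assumes N0: "N > 0" and U: "is_block N n (m+1) U"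
    and U1: "is_block N n m U1" "U1 \<subseteq> U" and U2: "is_block N n m U2" "U2 \<subseteq> U"
    and disj: "U1 \<inter> U2 = {}"
    and U1': "is_block N n k U1'" "U1' \<subseteq> U1" and U2': "is_block N n k U2'" "U2' \<subseteq> U2"
    and x1: "x1 \<in> U1'" and x2: "x2 \<in> U2'"
    and spins: "\<forall>v \<in> lattice N n. \<sigma> v = 1 \<or> \<sigma> v = -1"
  shows "(\<Sum>v\<in>lattice N n - (U1' \<union> U2'). real_of_int (\<sigma> v) * (J (hdist N n v x1) - J (hdist N n v x2))) =
    -2 * (\<Sum>i = k+1..m. (J i - J (m+1)) *
       (real (card {x \<in> U1. \<sigma> x = -1 \<and> x \<notin> U1' \<and> (\<forall>v \<in> U1'. hdist N n x v = i)})
        - real (card {x \<in> U2. \<sigma> x = -1 \<and> x \<notin> U2' \<and> (\<forall>v \<in> U2'. hdist N n x v = i)})))"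
proof -
  let ?L = "lattice N n" and ?g = "\<lambda>i. J i - J (m+1)"
  define f where "f v = real_of_int (\<sigma> v) * (J (hdist N n v x1) - J (hdist N n v x2))" for v
  have L: "U \<subseteq> ?L" "U1 \<subseteq> ?L" "U2 \<subseteq> ?L" using block_subset_lattice U U1 U2 by blast+
  have x12: "x1 \<in> U1" "x2 \<in> U2" using x1 x2 U1' U2' by blast+
  have spins_U: "\<forall>v \<in> U1. \<sigma> v = 1 \<or> \<sigma> v = -1" "\<forall>v \<in> U2. \<sigma> v = 1 \<or> \<sigma> v = -1"
    using spins L by blast+
  have to_x2: "hdist N n v x2 = m + 1" if "v \<in> U - U2" for v
    by (rule hdist_across_subblocks[OF U U2 N0 that x12(2)])
  have to_x1: "hdist N n v x1 = m + 1" if "v \<in> U - U1" for v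
    by (rule hdist_across_subblocks[OF U U1 N0 that x12(1)])
  have rest: "f v = 0" if v: "v \<in> ?L - (U1 \<union> U2)" for v
  proof (cases "v \<in> U")
    case True
    with v have "v \<in> U - U1" "v \<in> U - U2" by blast+
    then have "hdist N n v x1 = hdist N n v x2" by (simp only: to_x1 to_x2)
    then show ?thesis unfolding f_def by simp
  next
    case False
    have "x1 \<in> U" "x2 \<in> U" using x12 U1(2) U2(2) by blast+
    with v False have "hdist N n v x1 = hdist N n v x2" using hdist_block_const[OF U N0] by blast
    then show ?thesis unfolding f_def by simp
  qed
  have sum_U1: "(\<Sum>v\<in>U1 - U1'. f v) = (\<Sum>v\<in>U1 - U1'. real_of_int (\<sigma> v) * ?g (hdist N n v x1))"
  proof (intro sum.cong refl)
    fix v assume "v \<in> U1 - U1'"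
    then have "v \<in> U - U2" using U1(2) disj by blast
    then show "f v = real_of_int (\<sigma> v) * ?g (hdist N n v x1)" unfolding f_def by (simp only: to_x2)
  qed
  have sum_U2: "(\<Sum>v\<in>U2 - U2'. f v) = - (\<Sum>v\<in>U2 - U2'. real_of_int (\<sigma> v) * ?g (hdist N n v x2))"
    unfolding sum_negf[symmetric]
  proof (intro sum.cong refl)
    fix v assume "v \<in> U2 - U2'"
    then have "v \<in> U - U1" using U2(2) disj by blast
    then show "f v = - (real_of_int (\<sigma> v) * ?g (hdist N n v x2))"
      unfolding f_def by (simp only: to_x1) (simp add: algebra_simps)
  qed
  have annulus_U1: "(\<Sum>v\<in>U1 - U1'. real_of_int (\<sigma> v) * ?g (hdist N n v x1)) = (\<Sum>i = k+1..m. ?g i *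
      (real (N^i - N^(i-1)) - 2 * real (card {x \<in> U1. \<sigma> x = -1 \<and> x \<notin> U1' \<and> (\<forall>v \<in> U1'. hdist N n x v = i)})))"
    by (rule sum_spins_block_annulus[OF U1(1) U1' N0 x1 spins_U(1)])
  have annulus_U2: "(\<Sum>v\<in>U2 - U2'. real_of_int (\<sigma> v) * ?g (hdist N n v x2)) = (\<Sum>i = k+1..m. ?g i *
      (real (N^i - N^(i-1)) - 2 * real (card {x \<in> U2. \<sigma> x = -1 \<and> x \<notin> U2' \<and> (\<forall>v \<in> U2'. hdist N n x v = i)})))"
    by (rule sum_spins_block_annulus[OF U2(1) U2' N0 x2 spins_U(2)])
  have fin: "finite (U1 - U1')" "finite (U2 - U2')" "finite (?L - (U1 \<union> U2))"
    using L by (auto simp: lattice_def intro: finite_subset)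
  have split: "?L - (U1' \<union> U2') = (U1 - U1') \<union> ((U2 - U2') \<union> (?L - (U1 \<union> U2)))"
    using L U1'(2) U2'(2) disj by blast
  have disjoint: "(U2 - U2') \<inter> (?L - (U1 \<union> U2)) = {}" "(U1 - U1') \<inter> ((U2 - U2') \<union> (?L - (U1 \<union> U2))) = {}"
    using disj by blast+
  have "(\<Sum>v\<in>?L - (U1' \<union> U2'). f v) =
      (\<Sum>v\<in>U1 - U1'. f v) + ((\<Sum>v\<in>U2 - U2'. f v) + (\<Sum>v\<in>?L - (U1 \<union> U2). f v))"
    unfolding split sum.union_disjoint[OF fin(1) finite_UnI[OF fin(2,3)] disjoint(2)]
      sum.union_disjoint[OF fin(2,3) disjoint(1)] ..
  also have "\<dots> = (\<Sum>v\<in>U1 - U1'. real_of_int (\<sigma> v) * ?g (hdist N n v x1))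
      - (\<Sum>v\<in>U2 - U2'. real_of_int (\<sigma> v) * ?g (hdist N n v x2))"
    unfolding sum_U1 sum_U2 using rest by simp
  also have "\<dots> = -2 * (\<Sum>i = k+1..m. ?g i *
       (real (card {x \<in> U1. \<sigma> x = -1 \<and> x \<notin> U1' \<and> (\<forall>v \<in> U1'. hdist N n x v = i)})
        - real (card {x \<in> U2. \<sigma> x = -1 \<and> x \<notin> U2' \<and> (\<forall>v \<in> U2'. hdist N n x v = i)})))"
    unfolding annulus_U1 annulus_U2 sum_subtractf[symmetric] sum_distrib_left
    by (intro sum.cong refl) (simp add: algebra_simps)
  finally show ?thesis unfolding f_def .
qed

theorem lemma2p1:
  fixes N n k m :: nat and J :: "nat \<Rightarrow> real" and h :: real
    and U U1 U2 U1' U2' :: "nat set" and \<sigma> \<sigma>' :: "nat \<Rightarrow> int" and \<phi> :: "nat \<Rightarrow> nat"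
  assumes N2: "N \<ge> 2"
    and hpos: "h > 0"
    and Jpos: "\<forall>i \<in> {1..n}. J i > 0"
    and km: "k < m" and mn: "m \<le> n - 1"
    and U: "is_block N n (m+1) U"
    and U1: "is_block N n m U1" and U1sub: "U1 \<subseteq> U"
    and U2: "is_block N n m U2" and U2sub: "U2 \<subseteq> U"
    and disj: "U1 \<inter> U2 = {}"
    and U1': "is_block N n k U1'" and U1'sub: "U1' \<subseteq> U1"
    and U2': "is_block N n k U2'" and U2'sub: "U2' \<subseteq> U2"
    and spin: "\<forall>v \<in> lattice N n. \<sigma> v = 1 \<or> \<sigma> v = -1"
    and bij: "bij_betw \<phi> U1' U2'"
    and iso: "\<forall>x \<in> U1'. \<forall>y \<in> U1'. hdist N n (\<phi> x) (\<phi> y) = hdist N n x y"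
    and s_out: "\<forall>v. v \<notin> U1' \<union> U2' \<longrightarrow> \<sigma>' v = \<sigma> v"
    and s_1: "\<forall>v \<in> U1'. \<sigma>' v = \<sigma> (\<phi> v)"
    and s_2: "\<forall>v \<in> U2'. \<sigma>' v = \<sigma> (inv_into U1' \<phi> v)"
  shows "hamiltonian N n J h \<sigma>' - hamiltonian N n J h \<sigma> =
    (\<Sum>i = k+1..m.
       2 * (J i - J (m+1))
       * (real (card {x \<in> U1. \<sigma> x = -1 \<and> x \<notin> U1' \<and> (\<forall>v \<in> U1'. hdist N n x v = i)})
          - real (card {x \<in> U2. \<sigma> x = -1 \<and> x \<notin> U2' \<and> (\<forall>v \<in> U2'. hdist N n x v = i)}))
       * (real (card {v \<in> U2'. \<sigma> v = 1}) - real (card {v \<in> U1'. \<sigma> v = 1})))"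
proof -
  have N0: "N > 0" using N2 by simp
  obtain x1 where x1: "x1 \<in> U1'" using block_nonempty[OF U1' N0] by blast
  obtain x2 where x2: "x2 \<in> U2'" using block_nonempty[OF U2' N0] by blast
  have U1'L: "U1' \<subseteq> lattice N n" and U2'L: "U2' \<subseteq> lattice N n"
    using block_subset_lattice U1' U2' by blast+
  have cross: "hdist N n x y = m + 1" if "x \<in> U1'" "y \<in> U2'" for x y
    using hdist_across_subblocks[OF U U2 U2sub N0] that U1sub U1'sub U2'sub disj by blast
  have far1: "hdist N n v w = hdist N n v x1" if "v \<in> lattice N n - (U1' \<union> U2')" "w \<in> U1'" for v w
    using hdist_block_const[OF U1' N0] that x1 by blast
  have far2: "hdist N n v w = hdist N n v x2" if "v \<in> lattice N n - (U1' \<union> U2')" "w \<in> U2'" for v w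
    using hdist_block_const[OF U2' N0] that x2 by blast
  have fin: "finite U1'" "finite U2'" using U1'L U2'L finite_subset by (auto simp: lattice_def)
  have spins: "\<forall>v \<in> U1'. \<sigma> v = 1 \<or> \<sigma> v = -1" "\<forall>v \<in> U2'. \<sigma> v = 1 \<or> \<sigma> v = -1"
    using spin U1'L U2'L by blast+
  let ?A = "\<lambda>i. real (card {x \<in> U1. \<sigma> x = -1 \<and> x \<notin> U1' \<and> (\<forall>v \<in> U1'. hdist N n x v = i)})"
    and ?C = "\<lambda>i. real (card {x \<in> U2. \<sigma> x = -1 \<and> x \<notin> U2' \<and> (\<forall>v \<in> U2'. hdist N n x v = i)})"
    and ?P = "real (card {v \<in> U2'. \<sigma> v = 1}) - real (card {v \<in> U1'. \<sigma> v = 1})"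
  have spin_diff: "(\<Sum>v\<in>U2'. real_of_int (\<sigma> v)) - (\<Sum>v\<in>U1'. real_of_int (\<sigma> v)) = 2 * ?P"
    using sum_spins_pos[OF fin(1) spins(1)] sum_spins_pos[OF fin(2) spins(2)] bij_betw_same_card[OF bij]
    by simp
  have "hamiltonian N n J h \<sigma>' - hamiltonian N n J h \<sigma> =
      -1/2 * ((\<Sum>v\<in>U2'. real_of_int (\<sigma> v)) - (\<Sum>v\<in>U1'. real_of_int (\<sigma> v)))
      * (\<Sum>v\<in>lattice N n - (U1' \<union> U2'). real_of_int (\<sigma> v) * (J (hdist N n v x1) - J (hdist N n v x2)))"
    using U1sub U1'sub U2'sub disj
    by (intro hamiltonian_diff_swap[OF U1'L U2'L _ bij iso cross far1 far2 spin s_out s_1 s_2]) blast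
  also have "\<dots> = 2 * ?P * (\<Sum>i = k+1..m. (J i - J (m+1)) * (?A i - ?C i))"
    unfolding spin_diff sum_outside_sibling_subblocks[OF N0 U U1 U1sub U2 U2sub disj U1' U1'sub U2' U2'sub x1 x2 spin]
    by simp
  also have "\<dots> = (\<Sum>i = k+1..m. 2 * (J i - J (m+1)) * (?A i - ?C i) * ?P)"
    unfolding sum_distrib_left by (intro sum.cong refl) (simp add: algebra_simps)
  finally show ?thesis .
qed

end
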